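(* The sets of matrices $\{Q[\mathbf f]:\mathbf f\in\mathcal{LIN}_n^+\}\subset\{Q[\mathbf f]:\mathbf f\in\mathcal{LIN}_n\}$ are star-shaped about $0$ in the vector space of real anti-symmetric $n\times n$ matrices.
   Context: Let $\mathcal G$ be the group of strictly increasing continuous maps $f:[-1,1]\to[-1,1]$ with $f(\pm1)=\pm1$, $i$ the identity, $\mathcal G_0=\{f\in\mathcal G:\int_{-1}^1 f=0\}$, $f^e(t)=\tfrac12(f(t)+f(-t))$. For $f,g\in\mathcal G$, $Q(f,g)=\int_{-1}^1 f(g^{-1}(t))\,dt$. For $\mathbf f=(f_1,\dots,f_n)$, $Q[\mathbf f]$ is the $n\times n$ matrix with entries $Q[\mathbf f]_{ij}=Q(f_j,f_i)$ (it is anti-symmetric). $\mathcal{LIN}_n$ is the set of $\mathbf f\in\mathcal G_0^n$ with $\{i,f_1,\dots,f_n\}$ linearly independent; $\mathcal{LIN}_n^+$ the set of $\mathbf f\in\mathcal G_0^n$ with $\{f_1^e,\dots,f_n^e\}$ linearly independent. A subset $C$ of a vector space $V$ is star-shaped about $0$ if for every nonzero $v\in V$ the set $\{x\in\mathbb R:xv\in C\}$ is an interval containing $0$ in its interior. *)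

theory Defs
  imports "HOL-Analysis.Analysis"
begin

text \<open>Maps are represented as functions real => real; only their values on [-1,1] matter.\<close>

definition grpG :: "(real \<Rightarrow> real) set" where
  "grpG = {f. continuous_on {-1..1} f \<and> strict_mono_on {-1..1} f
              \<and> f ` {-1..1} \<subseteq> {-1..1} \<and> f (-1) = -1 \<and> f 1 = 1}"

definition grpG0 :: "(real \<Rightarrow> real) set" where
  "grpG0 = {f \<in> grpG. integral {-1..1} f = 0}"

definition even_part :: "(real \<Rightarrow> real) \<Rightarrow> real \<Rightarrow> real" where
  "even_part f = (\<lambda>t. (f t + f (-t)) / 2)"

definition Qf :: "(real \<Rightarrow> real) \<Rightarrow> (real \<Rightarrow> real) \<Rightarrow> real" where
  "Qf f g = integral {-1..1} (\<lambda>t. f (inv_into {-1..1} g t))"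

definition Qmat :: "('n::finite \<Rightarrow> real \<Rightarrow> real) \<Rightarrow> real^'n^'n" where
  "Qmat F = (\<chi> i j. Qf (F j) (F i))"

definition lin_indep_on :: "real set \<Rightarrow> ('i::finite \<Rightarrow> real \<Rightarrow> real) \<Rightarrow> bool" where
  "lin_indep_on S F \<longleftrightarrow>
     (\<forall>c. (\<forall>t\<in>S. (\<Sum>k\<in>UNIV. c k * F k t) = 0) \<longrightarrow> (\<forall>k. c k = 0))"

text \<open>LIN_n: f in G_0^n and the family (i, f_1, ..., f_n) linearly independent
  (index None stands for the identity i).\<close>
definition LIN :: "('n::finite \<Rightarrow> real \<Rightarrow> real) set" where
  "LIN = {F. (\<forall>j. F j \<in> grpG0) \<and>
             lin_indep_on {-1..1} (\<lambda>k::'n option. case k of None \<Rightarrow> (\<lambda>t. t) | Some j \<Rightarrow> F j)}"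

definition LINplus :: "('n::finite \<Rightarrow> real \<Rightarrow> real) set" where
  "LINplus = {F. (\<forall>j. F j \<in> grpG0) \<and> lin_indep_on {-1..1} (\<lambda>j. even_part (F j))}"

definition antisym_mats :: "(real^'n^'n) set" where
  "antisym_mats = {A. transpose A = - A}"

definition star_shaped0 :: "'v::real_vector set \<Rightarrow> 'v set \<Rightarrow> bool" where
  "star_shaped0 V C \<longleftrightarrow>
     (\<forall>v\<in>V. v \<noteq> 0 \<longrightarrow> is_interval {x::real. x *\<^sub>R v \<in> C} \<and> 0 \<in> interior {x::real. x *\<^sub>R v \<in> C})"

end

theory Submission
  imports Defs
begin

text \<open>Three operations on families of maps act affinely on the matrix Q[f]. Rescaling every
  f_j into a subinterval of half-length r multiplies Q[f] by r^2; conjugating by t \<mapsto> -t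
  negates it; and placing one family on [-1,0] and another on [0,1] averages their matrices with
  weight 1/4. All three preserve the independence conditions of LIN_n and LIN_n^+ (placing the
  identity on [-1,0] even turns LIN_n into LIN_n^+), so both image sets are balanced: closed under
  scalars of modulus at most 1. Two explicit polynomial maps realise a multiple of each elementary
  antisymmetric matrix, and iterated juxtaposition into a LIN_n family yields a positive multiple
  of any antisymmetric matrix. A balanced set containing a multiple of every direction is
  star-shaped about 0.\<close>

section \<open>The group G\<close>

lemma grpG_continuous: "f \<in> grpG \<Longrightarrow> continuous_on {-1..1} f"
  and grpG_strict_mono: "f \<in> grpG \<Longrightarrow> strict_mono_on {-1..1} f"
  and grpG_mem: "f \<in> grpG \<Longrightarrow> t \<in> {-1..1} \<Longrightarrow> f t \<in> {-1..1}"
  and grpG_minus_one [simp]: "f \<in> grpG \<Longrightarrow> f (-1) = -1"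
  and grpG_one [simp]: "f \<in> grpG \<Longrightarrow> f 1 = 1"
  by (auto simp: grpG_def image_subset_iff)

lemma grpG_intro:
  assumes "continuous_on {-1..1} f" "strict_mono_on {-1..1} f" "f (-1) = -1" "f 1 = 1"
  shows "f \<in> grpG"
proof -
  have "f t \<in> {-1..1}" if "t \<in> {-1..1}" for t
    using that assms strict_mono_on_leD[OF assms(2), of "-1" t] strict_mono_on_leD[OF assms(2), of t 1]
    by auto
  then show ?thesis using assms unfolding grpG_def by auto
qed

lemma grpG_less: "f \<in> grpG \<Longrightarrow> x \<in> {-1..1} \<Longrightarrow> y \<in> {-1..1} \<Longrightarrow> x < y \<Longrightarrow> f x < f y"
  using grpG_strict_mono by (metis strict_mono_onD)

lemma grpG_inj: "f \<in> grpG \<Longrightarrow> inj_on f {-1..1}"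
  using grpG_strict_mono strict_mono_on_imp_inj_on by blast

lemma grpG_image: assumes "f \<in> grpG" shows "f ` {-1..1} = {-1..1}"
proof
  show "f ` {-1..1} \<subseteq> {-1..1}" using grpG_mem[OF assms] by blast
  show "{-1..1} \<subseteq> f ` {-1..1}"
  proof
    fix y :: real assume "y \<in> {-1..1}"
    then obtain x where "-1 \<le> x" "x \<le> 1" "f x = y"
      using IVT'[of f "-1" y 1] grpG_continuous[OF assms] assms by auto
    then show "y \<in> f ` {-1..1}" by auto
  qed
qed

lemma grpG_inv_into_mem: "f \<in> grpG \<Longrightarrow> t \<in> {-1..1} \<Longrightarrow> inv_into {-1..1} f t \<in> {-1..1}"
  by (metis grpG_image inv_into_into)

lemma grpG_f_inv_into: "f \<in> grpG \<Longrightarrow> t \<in> {-1..1} \<Longrightarrow> f (inv_into {-1..1} f t) = t"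
  by (metis grpG_image f_inv_into_f)

lemma grpG_inv_into_f: "f \<in> grpG \<Longrightarrow> t \<in> {-1..1} \<Longrightarrow> inv_into {-1..1} f (f t) = t"
  by (metis grpG_inj inv_into_f_f)

lemma grpG_inv_into: assumes f: "f \<in> grpG" shows "inv_into {-1..1} f \<in> grpG"
proof (rule grpG_intro)
  let ?g = "inv_into {-1..1} f"
  have "continuous_on (f ` {-1..1}) ?g"
    by (rule continuous_on_inv[OF grpG_continuous[OF f]]) (auto simp: grpG_inv_into_f[OF f])
  then show "continuous_on {-1..1} ?g" using grpG_image[OF f] by simp
  show "strict_mono_on {-1..1} ?g"
  proof (rule strict_mono_onI)
    fix x y :: real assume xy: "x \<in> {-1..1}" "y \<in> {-1..1}" "x < y"
    show "?g x < ?g y"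
    proof (rule ccontr)
      assume "\<not> ?g x < ?g y"
      then have "f (?g y) \<le> f (?g x)"
        using grpG_less[OF f] grpG_inv_into_mem[OF f] xy by (metis linorder_not_less order_le_less)
      then show False using xy grpG_f_inv_into[OF f] by auto
    qed
  qed
  show "?g (-1) = -1" "?g 1 = 1"
    using grpG_inv_into_f[OF f, of "-1"] grpG_inv_into_f[OF f, of 1] f by simp_all
qed

lemma grpG_comp: assumes "f \<in> grpG" "g \<in> grpG" shows "(\<lambda>t. f (g t)) \<in> grpG"
proof (rule grpG_intro)
  show "continuous_on {-1..1} (\<lambda>t. f (g t))"
    by (rule continuous_on_compose2[OF grpG_continuous[OF assms(1)] grpG_continuous[OF assms(2)]])
      (use grpG_mem[OF assms(2)] in blast)
  show "strict_mono_on {-1..1} (\<lambda>t. f (g t))"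
    by (rule strict_mono_onI) (meson grpG_mem grpG_less assms)
qed (use assms in simp_all)

lemma grpG_id: "(\<lambda>t. t) \<in> grpG"
  by (rule grpG_intro) (auto intro: strict_mono_onI)

lemma grpG_integrable: "f \<in> grpG \<Longrightarrow> f integrable_on {-1..1}"
  using grpG_continuous integrable_continuous_real by blast

lemma grpG0_iff: "f \<in> grpG0 \<longleftrightarrow> f \<in> grpG \<and> (f has_integral 0) {-1..1}"
  using grpG_integrable has_integral_integrable_integral unfolding grpG0_def by blast

lemma grpG0_grpG: "f \<in> grpG0 \<Longrightarrow> f \<in> grpG"
  by (simp add: grpG0_def)

lemma id_has_integral: "((\<lambda>x::real. x) has_integral 0) {-1..1}"
  using ident_has_integral[of "-1::real" 1] by simp

lemma grpG0_id: "(\<lambda>t. t) \<in> grpG0"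
  using grpG_id id_has_integral by (simp add: grpG0_iff)

lemma Qf_eq_integral_inverse:
  assumes g: "g \<in> grpG" and k: "\<And>t. t \<in> {-1..1} \<Longrightarrow> k t \<in> {-1..1} \<and> g (k t) = t"
  shows "Qf f g = integral {-1..1} (\<lambda>t. f (k t))"
  unfolding Qf_def
proof (rule integral_cong)
  fix t :: real assume "t \<in> {-1..1}"
  then have "inv_into {-1..1} g t = k t"
    using k by (intro inv_into_f_eq[OF grpG_inj[OF g]]) auto
  then show "f (inv_into {-1..1} g t) = f (k t)" by simp
qed

lemma Qf_self: assumes "f \<in> grpG" shows "Qf f f = 0"
proof -
  have "Qf f f = integral {-1..1} (\<lambda>t. t)"
    unfolding Qf_def by (rule integral_cong) (simp add: grpG_f_inv_into[OF assms])
  then show ?thesis using integral_unique[OF id_has_integral] by simp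
qed

lemma Qf_id_right: "Qf f (\<lambda>t. t) = integral {-1..1} f"
  using Qf_eq_integral_inverse[OF grpG_id, of "\<lambda>t. t"] by simp

section \<open>Localised copies\<close>

definition local_window :: "real \<Rightarrow> real \<Rightarrow> bool" where
  "local_window m r \<longleftrightarrow> 0 < r \<and> -1 \<le> m - r \<and> m + r \<le> 1"

definition localize :: "real \<Rightarrow> real \<Rightarrow> (real \<Rightarrow> real) \<Rightarrow> real \<Rightarrow> real" where
  "localize m r f t = t + r * (f (clamp (-1) 1 ((t - m) / r)) - clamp (-1) 1 ((t - m) / r))"

lemma clamp_real: "clamp (-1) 1 (x::real) = max (-1) (min 1 x)"
  unfolding clamp_def Basis_real_def by auto

lemma localize_outside:
  assumes "f \<in> grpG" "0 < r" "t \<notin> {m - r<..<m + r}"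
  shows "localize m r f t = t"
proof -
  have "(t - m) / r \<le> -1 \<or> 1 \<le> (t - m) / r"
    using assms by (auto simp: divide_le_eq le_divide_eq)
  then have "clamp (-1) 1 ((t - m) / r) \<in> {-1, 1}" by (auto simp: clamp_real)
  then show ?thesis using assms(1) by (auto simp: localize_def)
qed

lemma localize_inside:
  assumes "0 < r" "t \<in> {m - r..m + r}"
  shows "localize m r f t = m + r * f ((t - m) / r)"
proof -
  have "(t - m) / r \<in> {-1..1}" using assms by (auto simp: divide_le_eq le_divide_eq)
  then have c: "clamp (-1) 1 ((t - m) / r) = (t - m) / r" by (simp add: clamp_real)
  show ?thesis unfolding localize_def c using assms(1) by (simp add: field_simps)
qed

lemma local_window_0: "0 < r \<Longrightarrow> r \<le> 1 \<Longrightarrow> local_window 0 r"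
  by (simp add: local_window_def)

lemma scale_mem_interval:
  assumes "0 < r" "r \<le> 1" "s \<in> {-1..1}"
  shows "r * s \<in> {-1..(1::real)}"
proof -
  have "-r \<le> r * s" "r * s \<le> r"
    using mult_left_mono[of s 1 r] mult_left_mono[of "-1" s r] assms by auto
  then show ?thesis using assms(2) by auto
qed

lemma localize_0_scale:
  assumes "0 < r" "s \<in> {-1..1}"
  shows "localize 0 r f (r * s) = r * f s"
proof -
  have "-r \<le> r * s" "r * s \<le> r"
    using mult_left_mono[of s 1 r] mult_left_mono[of "-1" s r] assms by auto
  then show ?thesis using localize_inside[of r "r * s" 0 f] assms(1) by simp
qed

lemma localize_mem_window:
  assumes "f \<in> grpG" "0 < r" "t \<in> {m - r..m + r}"
  shows "localize m r f t \<in> {m - r..m + r}"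
proof -
  have "(t - m) / r \<in> {-1..1}" using assms by (auto simp: divide_le_eq le_divide_eq)
  then have "f ((t - m) / r) \<in> {-1..1}" by (rule grpG_mem[OF assms(1)])
  then have "-r \<le> r * f ((t - m) / r)" "r * f ((t - m) / r) \<le> r"
    using mult_left_mono[of "-1" "f ((t - m) / r)" r] mult_left_mono[of "f ((t - m) / r)" 1 r] assms(2)
    by auto
  then show ?thesis using localize_inside[OF assms(2,3)] by auto
qed

lemma localize_idI: "(\<And>x. x \<in> {-1..1} \<Longrightarrow> f x = x) \<Longrightarrow> localize m r f t = t"
  by (simp add: localize_def clamp_real)

lemma localize_continuous_on:
  assumes f: "f \<in> grpG" and r: "r \<noteq> 0"
  shows "continuous_on S (localize m r f)"
proof -
  have "continuous_on UNIV (\<lambda>x. f (clamp (-1) 1 x))" "continuous_on UNIV (clamp (-1) (1::real))"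
    using clamp_continuous_on[of "-1" 1 f] clamp_continuous_on[of "-1" 1 "\<lambda>x. x"] grpG_continuous[OF f]
    by (simp_all add: cbox_interval continuous_on_id)
  then have "continuous_on S (\<lambda>t. f (clamp (-1) 1 ((t - m) / r)))"
    "continuous_on S (\<lambda>t. clamp (-1) 1 ((t - m) / r))"
    using r by (auto intro!: continuous_on_compose2[of UNIV _ _ "\<lambda>t. (t - m) / r"] continuous_intros)
  then show ?thesis
    unfolding localize_def[abs_def] by (intro continuous_intros)
qed

lemma localize_strict_mono:
  assumes f: "f \<in> grpG" and r: "0 < r"
  shows "strict_mono (localize m r f)"
proof (rule strict_monoI)
  have out: "localize m r f t = t" if "t \<notin> {m - r<..<m + r}" for t
    by (rule localize_outside[OF f r that])
  have rng: "localize m r f t \<in> {m - r..m + r}" if "t \<in> {m - r..m + r}" for t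
    by (rule localize_mem_window[OF f r that])
  fix t1 t2 :: real assume t12: "t1 < t2"
  show "localize m r f t1 < localize m r f t2"
  proof (cases "t1 \<in> {m - r..m + r} \<and> t2 \<in> {m - r..m + r}")
    case True
    then have "(t1 - m) / r \<in> {-1..1}" "(t2 - m) / r \<in> {-1..1}" "(t1 - m) / r < (t2 - m) / r"
      using t12 r by (auto simp: divide_le_eq le_divide_eq divide_strict_right_mono)
    then have "f ((t1 - m) / r) < f ((t2 - m) / r)" using grpG_less[OF f] by blast
    then show ?thesis using localize_inside[OF r] True r by simp
  next
    case False
    then consider "t1 < m - r" | "m + r < t2" using t12 by force
    then show ?thesis
    proof cases
      case 1
      then have "t1 < localize m r f t2"
        using t12 rng[of t2] out[of t2] by (cases "t2 \<in> {m - r..m + r}") auto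
      then show ?thesis using out[of t1] 1 by simp
    next
      case 2
      then have "localize m r f t1 < t2"
        using t12 rng[of t1] out[of t1] by (cases "t1 \<in> {m - r..m + r}") auto
      then show ?thesis using out[of t2] 2 by simp
    qed
  qed
qed

lemma localize_grpG:
  assumes f: "f \<in> grpG" and w: "local_window m r"
  shows "localize m r f \<in> grpG"
proof (rule grpG_intro)
  have r: "0 < r" using w by (simp add: local_window_def)
  show "continuous_on {-1..1} (localize m r f)" using r by (intro localize_continuous_on[OF f]) simp
  show "strict_mono_on {-1..1} (localize m r f)"
    using localize_strict_mono[OF f r] by (simp add: strict_mono_on_def strict_mono_def)
  show "localize m r f (-1) = -1" "localize m r f 1 = 1"
    using w by (auto intro: localize_outside[OF f r] simp: local_window_def)
qed

lemma localize_comp: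
  assumes f: "f \<in> grpG" and g: "g \<in> grpG" and r: "0 < r"
  shows "localize m r f (localize m r g t) = localize m r (\<lambda>x. f (g x)) t"
proof (cases "t \<in> {m - r..m + r}")
  case True
  then have "localize m r g t \<in> {m - r..m + r}" by (rule localize_mem_window[OF g r])
  then show ?thesis using localize_inside[OF r] True r by simp
next
  case False
  then show ?thesis
    using localize_outside[OF _ r] f g grpG_comp[OF f g] by auto
qed

lemma localize_has_integral:
  assumes f: "f \<in> grpG" and w: "local_window m r"
  shows "(localize m r f has_integral (r\<^sup>2 * integral {-1..1} f)) {-1..1}"
proof -
  have r: "0 < r" using w by (simp add: local_window_def)
  let ?I = "integral {-1..1} f"
  have "((\<lambda>x. f ((1/r) *\<^sub>R x + (- m / r))) has_integral (?I /\<^sub>R (1/r) ^ DIM(real)))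
         (cbox ((-1 - (- m / r)) /\<^sub>R (1/r)) ((1 - (- m / r)) /\<^sub>R (1/r)))"
    by (rule has_integral_affinity') (use grpG_integrable[OF f] r in \<open>simp_all add: integrable_integral\<close>)
  moreover have "cbox ((-1 - (- m / r)) /\<^sub>R (1/r)) ((1 - (- m / r)) /\<^sub>R (1/r)) = {m - r..m + r}"
    using r by (simp add: field_simps)
  moreover have "(\<lambda>x. f ((1/r) *\<^sub>R x + (- m / r))) = (\<lambda>x. f ((x - m) / r))"
    by (simp add: field_simps diff_divide_distrib)
  ultimately have "((\<lambda>x. f ((x - m) / r)) has_integral (r * ?I)) {m - r..m + r}"
    using r by simp
  moreover have "((\<lambda>x. m) has_integral (2 * r * m)) {m - r..m + r}"
    using has_integral_const_real[of m "m - r" "m + r"] r by simp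
  ultimately have "((\<lambda>x. r * f ((x - m) / r) - (x - m)) has_integral
      (r * (r * ?I) - ((((m + r)\<^sup>2 - (m - r)\<^sup>2) / 2) - 2 * r * m))) {m - r..m + r}"
    using r by (intro has_integral_diff has_integral_mult_right ident_has_integral) auto
  then have "((\<lambda>x. r * f ((x - m) / r) - (x - m)) has_integral (r\<^sup>2 * ?I)) {m - r..m + r}"
    using r by (simp add: power2_eq_square algebra_simps)
  then have "((\<lambda>t. localize m r f t - t) has_integral (r\<^sup>2 * ?I)) {m - r..m + r}"
    by (subst has_integral_cong[where g="\<lambda>x. r * f ((x - m) / r) - (x - m)"])
      (auto simp: localize_inside[OF r])
  then have "((\<lambda>t. localize m r f t - t) has_integral (r\<^sup>2 * ?I)) {-1..1}"
    by (rule has_integral_on_superset)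
      (use w localize_outside[OF f r] in \<open>auto simp: local_window_def\<close>)
  from has_integral_add[OF this id_has_integral] show ?thesis by simp
qed

lemma localize_grpG0:
  assumes "f \<in> grpG0" and w: "local_window m r"
  shows "localize m r f \<in> grpG0"
proof -
  have f: "f \<in> grpG" "integral {-1..1} f = 0" using assms(1) by (auto simp: grpG0_def)
  show ?thesis using localize_grpG[OF f(1) w] localize_has_integral[OF f(1) w] f(2) by (simp add: grpG0_iff)
qed

lemma Qf_localize:
  assumes f: "f \<in> grpG" and g: "g \<in> grpG" and w: "local_window m r"
  shows "Qf (localize m r f) (localize m r g) = r\<^sup>2 * Qf f g"
proof -
  let ?g' = "inv_into {-1..1} g"
  have r: "0 < r" using w by (simp add: local_window_def)
  have "Qf (localize m r f) (localize m r g) = integral {-1..1} (\<lambda>t. localize m r f (localize m r ?g' t))"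
  proof (rule Qf_eq_integral_inverse[OF localize_grpG[OF g w]])
    fix t :: real assume t: "t \<in> {-1..1}"
    have "localize m r g (localize m r ?g' t) = localize m r (\<lambda>x. g (?g' x)) t"
      by (rule localize_comp[OF g grpG_inv_into[OF g] r])
    also have "\<dots> = t" by (rule localize_idI) (simp add: grpG_f_inv_into[OF g])
    finally show "localize m r ?g' t \<in> {-1..1} \<and> localize m r g (localize m r ?g' t) = t"
      using grpG_mem[OF localize_grpG[OF grpG_inv_into[OF g] w] t] by simp
  qed
  also have "\<dots> = integral {-1..1} (localize m r (\<lambda>x. f (?g' x)))"
    using localize_comp[OF f grpG_inv_into[OF g] r] by simp
  also have "\<dots> = r\<^sup>2 * Qf f g"
    unfolding Qf_def by (rule integral_unique[OF localize_has_integral[OF grpG_comp[OF f grpG_inv_into[OF g]] w]])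
  finally show ?thesis .
qed

section \<open>Juxtaposition and reflection\<close>

text \<open>The two displacements have disjoint supports: on [-1,0] this is a rescaled copy of f,
  on [0,1] one of g.\<close>
definition juxtapose :: "(real \<Rightarrow> real) \<Rightarrow> (real \<Rightarrow> real) \<Rightarrow> real \<Rightarrow> real" where
  "juxtapose f g t = localize (-1/2) (1/2) f t + localize (1/2) (1/2) g t - t"

lemma local_window_halves: "local_window (-1/2) (1/2)" "local_window (1/2) (1/2)"
  by (auto simp: local_window_def)

lemma juxtapose_left: "g \<in> grpG \<Longrightarrow> t \<le> 0 \<Longrightarrow> juxtapose f g t = localize (-1/2) (1/2) f t"
  using localize_outside[of g "1/2" t "1/2"] by (simp add: juxtapose_def)

lemma juxtapose_right: "f \<in> grpG \<Longrightarrow> 0 \<le> t \<Longrightarrow> juxtapose f g t = localize (1/2) (1/2) g t"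
  using localize_outside[of f "1/2" t "-1/2"] by (simp add: juxtapose_def)

lemma juxtapose_eq_comp:
  assumes f: "f \<in> grpG" and g: "g \<in> grpG"
  shows "juxtapose f g t = localize (-1/2) (1/2) f (localize (1/2) (1/2) g t)"
proof (cases "t \<le> 0")
  case True
  then have "localize (1/2) (1/2) g t = t" by (intro localize_outside[OF g]) auto
  then show ?thesis using juxtapose_left[OF g True] by simp
next
  case False
  have "0 \<le> localize (1/2) (1/2) g t"
  proof (cases "t \<le> 1")
    case True
    then show ?thesis using localize_mem_window[OF g, of "1/2" t "1/2"] False by simp
  next
    case False
    then have "localize (1/2) (1/2) g t = t" by (intro localize_outside[OF g]) auto
    then show ?thesis using False by simp
  qed
  then have "localize (-1/2) (1/2) f (localize (1/2) (1/2) g t) = localize (1/2) (1/2) g t"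
    by (intro localize_outside[OF f]) auto
  then show ?thesis using juxtapose_right[OF f, of t g] False by simp
qed

lemma juxtapose_grpG:
  assumes "f \<in> grpG" "g \<in> grpG"
  shows "juxtapose f g \<in> grpG"
proof -
  have "(\<lambda>t. localize (-1/2) (1/2) f (localize (1/2) (1/2) g t)) \<in> grpG"
    using assms local_window_halves by (blast intro: grpG_comp[OF localize_grpG localize_grpG])
  moreover have "juxtapose f g = (\<lambda>t. localize (-1/2) (1/2) f (localize (1/2) (1/2) g t))"
    by (intro ext juxtapose_eq_comp[OF assms])
  ultimately show ?thesis by simp
qed

lemma juxtapose_idI:
  assumes "\<And>x. x \<in> {-1..1} \<Longrightarrow> f x = x" "\<And>x. x \<in> {-1..1} \<Longrightarrow> g x = x"
  shows "juxtapose f g t = t"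
  using localize_idI[OF assms(1)] localize_idI[OF assms(2)] by (simp add: juxtapose_def)

lemma juxtapose_comp:
  assumes f1: "f1 \<in> grpG" and g1: "g1 \<in> grpG" and f2: "f2 \<in> grpG" and g2: "g2 \<in> grpG"
    and t: "t \<in> {-1..1}"
  shows "juxtapose f1 g1 (juxtapose f2 g2 t) = juxtapose (\<lambda>x. f1 (f2 x)) (\<lambda>x. g1 (g2 x)) t"
proof (cases "t \<le> 0")
  case True
  let ?L = "localize (-1/2) (1/2)"
  have "?L f2 t \<le> 0" using localize_mem_window[OF f2, of "1/2" t "-1/2"] t True by simp
  then have "juxtapose f1 g1 (juxtapose f2 g2 t) = ?L f1 (?L f2 t)"
    using juxtapose_left[OF g2 True] juxtapose_left[OF g1, of "?L f2 t" f1] by simp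
  also have "\<dots> = ?L (\<lambda>x. f1 (f2 x)) t" by (rule localize_comp[OF f1 f2]) simp
  also have "\<dots> = juxtapose (\<lambda>x. f1 (f2 x)) (\<lambda>x. g1 (g2 x)) t"
    using juxtapose_left[OF grpG_comp[OF g1 g2] True] by simp
  finally show ?thesis .
next
  case False
  let ?R = "localize (1/2) (1/2)"
  have "0 \<le> ?R g2 t" using localize_mem_window[OF g2, of "1/2" t "1/2"] t False by simp
  then have "juxtapose f1 g1 (juxtapose f2 g2 t) = ?R g1 (?R g2 t)"
    using juxtapose_right[OF f2, of t g2] juxtapose_right[OF f1, of "?R g2 t" g1] False by simp
  also have "\<dots> = ?R (\<lambda>x. g1 (g2 x)) t" by (rule localize_comp[OF g1 g2]) simp
  also have "\<dots> = juxtapose (\<lambda>x. f1 (f2 x)) (\<lambda>x. g1 (g2 x)) t"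
    using juxtapose_right[OF grpG_comp[OF f1 f2], of t] False by simp
  finally show ?thesis .
qed

lemma juxtapose_has_integral:
  assumes "f \<in> grpG" "g \<in> grpG"
  shows "(juxtapose f g has_integral (integral {-1..1} f + integral {-1..1} g) / 4) {-1..1}"
proof -
  have "((\<lambda>t. localize (-1/2) (1/2) f t + localize (1/2) (1/2) g t - t) has_integral
      ((1/2)\<^sup>2 * integral {-1..1} f + (1/2)\<^sup>2 * integral {-1..1} g - 0)) {-1..1}"
    by (intro has_integral_diff has_integral_add localize_has_integral id_has_integral assms
        local_window_halves)
  then show ?thesis unfolding juxtapose_def[abs_def] by (simp add: power2_eq_square add_divide_distrib)
qed

lemma juxtapose_grpG0:
  assumes "f \<in> grpG0" "g \<in> grpG0"
  shows "juxtapose f g \<in> grpG0"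
proof -
  have "f \<in> grpG" "g \<in> grpG" "integral {-1..1} f = 0" "integral {-1..1} g = 0"
    using assms by (auto simp: grpG0_def)
  then show ?thesis using juxtapose_grpG[of f g] juxtapose_has_integral[of f g] by (simp add: grpG0_iff)
qed

lemma juxtapose_upper_half:
  assumes "f \<in> grpG" "s \<in> {-1..1}"
  shows "juxtapose f g ((s + 1) / 2) = g s / 2 + 1 / 2"
proof -
  have "juxtapose f g ((s + 1) / 2) = localize (1/2) (1/2) g ((s + 1) / 2)"
    using assms by (intro juxtapose_right) auto
  also have "\<dots> = 1/2 + 1/2 * g (((s + 1) / 2 - 1/2) / (1/2))"
    using assms(2) by (intro localize_inside) auto
  finally show ?thesis by (simp add: field_simps)
qed

lemma even_part_juxtapose_id:
  assumes h: "h \<in> grpG" and s: "s \<in> {-1..1}"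
  shows "even_part (juxtapose (\<lambda>t. t) h) ((s + 1) / 2) = (h s - s) / 4"
proof -
  have l: "juxtapose (\<lambda>t. t) h (- ((s + 1) / 2)) = - ((s + 1) / 2)"
    using h s by (simp add: juxtapose_left localize_idI)
  have u: "juxtapose (\<lambda>t. t) h ((s + 1) / 2) = h s / 2 + 1 / 2"
    by (rule juxtapose_upper_half[OF grpG_id s])
  show ?thesis unfolding even_part_def l u by (simp add: field_simps)
qed

lemma Qf_juxtapose:
  assumes f1: "f1 \<in> grpG" and g1: "g1 \<in> grpG" and f2: "f2 \<in> grpG" and g2: "g2 \<in> grpG"
  shows "Qf (juxtapose f1 g1) (juxtapose f2 g2) = (Qf f1 f2 + Qf g1 g2) / 4"
proof -
  let ?f2' = "inv_into {-1..1} f2" and ?g2' = "inv_into {-1..1} g2"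
  have f2': "?f2' \<in> grpG" and g2': "?g2' \<in> grpG" using f2 g2 by (simp_all add: grpG_inv_into)
  have "Qf (juxtapose f1 g1) (juxtapose f2 g2) = integral {-1..1} (\<lambda>t. juxtapose f1 g1 (juxtapose ?f2' ?g2' t))"
  proof (rule Qf_eq_integral_inverse[OF juxtapose_grpG[OF f2 g2]])
    fix t :: real assume t: "t \<in> {-1..1}"
    have "juxtapose f2 g2 (juxtapose ?f2' ?g2' t) = juxtapose (\<lambda>x. f2 (?f2' x)) (\<lambda>x. g2 (?g2' x)) t"
      by (rule juxtapose_comp[OF f2 g2 f2' g2' t])
    also have "\<dots> = t"
      by (rule juxtapose_idI) (simp_all add: grpG_f_inv_into[OF f2] grpG_f_inv_into[OF g2])
    finally show "juxtapose ?f2' ?g2' t \<in> {-1..1} \<and> juxtapose f2 g2 (juxtapose ?f2' ?g2' t) = t"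
      using grpG_mem[OF juxtapose_grpG[OF f2' g2'] t] by simp
  qed
  also have "\<dots> = integral {-1..1} (juxtapose (\<lambda>x. f1 (?f2' x)) (\<lambda>x. g1 (?g2' x)))"
    by (rule integral_cong) (rule juxtapose_comp[OF f1 g1 f2' g2'])
  also have "\<dots> = (Qf f1 f2 + Qf g1 g2) / 4"
    unfolding Qf_def
    by (rule integral_unique[OF juxtapose_has_integral[OF grpG_comp[OF f1 f2'] grpG_comp[OF g1 g2']]])
  finally show ?thesis .
qed

definition reflect :: "(real \<Rightarrow> real) \<Rightarrow> real \<Rightarrow> real" where
  "reflect f t = - f (- t)"

lemma reflect_grpG: assumes f: "f \<in> grpG" shows "reflect f \<in> grpG"
proof (rule grpG_intro)
  have "continuous_on {-1..1} (\<lambda>t. f (- t))"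
    by (rule continuous_on_compose2[OF grpG_continuous[OF f]]) (auto intro: continuous_intros)
  then show "continuous_on {-1..1} (reflect f)"
    unfolding reflect_def[abs_def] by (rule continuous_on_minus)
  show "strict_mono_on {-1..1} (reflect f)"
    by (rule strict_mono_onI) (use grpG_less[OF f] in \<open>auto simp: reflect_def\<close>)
qed (use f in \<open>simp_all add: reflect_def\<close>)

lemma reflect_has_integral:
  assumes "(h has_integral I) {-1..1}"
  shows "(reflect h has_integral (- I)) {-1..1}"
proof -
  have "((\<lambda>x. h (- x)) has_integral I) {- 1..- (- 1)}"
    using assms by (subst has_integral_reflect_real) simp
  then show ?thesis unfolding reflect_def[abs_def] by (intro has_integral_neg) simp
qed

lemma reflect_grpG0: "f \<in> grpG0 \<Longrightarrow> reflect f \<in> grpG0"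
  using reflect_grpG[of f] reflect_has_integral[of f 0] by (simp add: grpG0_iff)

lemma Qf_reflect:
  assumes f: "f \<in> grpG" and g: "g \<in> grpG"
  shows "Qf (reflect f) (reflect g) = - Qf f g"
proof -
  let ?g' = "inv_into {-1..1} g"
  have "Qf (reflect f) (reflect g) = integral {-1..1} (\<lambda>t. reflect f (reflect ?g' t))"
    by (rule Qf_eq_integral_inverse[OF reflect_grpG[OF g]])
      (use grpG_mem[OF reflect_grpG[OF grpG_inv_into[OF g]]] in \<open>auto simp: reflect_def grpG_f_inv_into[OF g]\<close>)
  also have "\<dots> = integral {-1..1} (reflect (\<lambda>x. f (?g' x)))"
    unfolding reflect_def by simp
  also have "\<dots> = - Qf f g"
    unfolding Qf_def
    by (rule integral_unique[OF reflect_has_integral])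
      (use grpG_integrable[OF grpG_comp[OF f grpG_inv_into[OF g]]] in \<open>simp add: integrable_integral\<close>)
  finally show ?thesis .
qed

section \<open>Linear independence\<close>

definition with_id :: "('n \<Rightarrow> real \<Rightarrow> real) \<Rightarrow> 'n option \<Rightarrow> real \<Rightarrow> real" where
  "with_id F k = (case k of None \<Rightarrow> (\<lambda>t. t) | Some j \<Rightarrow> F j)"

lemma with_id_simps [simp]: "with_id F None = (\<lambda>t. t)" "with_id F (Some j) = F j"
  by (simp_all add: with_id_def)

lemma LIN_iff: "F \<in> LIN \<longleftrightarrow> (\<forall>j. F j \<in> grpG0) \<and> lin_indep_on {-1..1} (with_id F)"
  unfolding LIN_def with_id_def[abs_def] by simp

lemma sum_UNIV_option: "(\<Sum>k\<in>UNIV. g k) = g None + (\<Sum>j\<in>(UNIV::'n::finite set). g (Some j))"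
  by (simp add: UNIV_option_conv sum.reindex)

lemma lin_indep_on_affine_transfer:
  fixes F G :: "'i::finite \<Rightarrow> real \<Rightarrow> real"
  assumes F: "lin_indep_on S F" and c: "c \<noteq> 0"
    and \<sigma>: "\<And>s. s \<in> S \<Longrightarrow> \<sigma> s \<in> T"
    and G: "\<And>k s. s \<in> S \<Longrightarrow> G k (\<sigma> s) = c * F k s + d"
    and normalized: "d = 0 \<or> (\<exists>p\<in>T. \<forall>k. G k p = 1)"
  shows "lin_indep_on T G"
  unfolding lin_indep_on_def
proof (rule allI, rule impI)
  fix a :: "'i \<Rightarrow> real"
  assume a: "\<forall>t\<in>T. (\<Sum>k\<in>UNIV. a k * G k t) = 0"
  have d: "d * sum a UNIV = 0"
    using normalized a by auto
  have "(\<Sum>k\<in>UNIV. a k * F k s) = 0" if s: "s \<in> S" for s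
  proof -
    have "c * (\<Sum>k\<in>UNIV. a k * F k s) + d * sum a UNIV = (\<Sum>k\<in>UNIV. a k * G k (\<sigma> s))"
      by (simp add: G[OF s] sum_distrib_left sum_distrib_right sum.distrib algebra_simps)
    also have "\<dots> = 0" using a \<sigma>[OF s] by blast
    finally show ?thesis using c d by simp
  qed
  then show "\<forall>k. a k = 0" using F unfolding lin_indep_on_def by blast
qed

lemma LINplus_subset_LIN: "LINplus \<subseteq> LIN"
proof
  fix F :: "'n::finite \<Rightarrow> real \<Rightarrow> real" assume "F \<in> LINplus"
  then have F0: "\<forall>j. F j \<in> grpG0" and E: "lin_indep_on {-1..1} (\<lambda>j. even_part (F j))"
    by (auto simp: LINplus_def)
  have "lin_indep_on {-1..1} (with_id F)"
    unfolding lin_indep_on_def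
  proof (rule allI, rule impI)
    fix a :: "'n option \<Rightarrow> real"
    assume "\<forall>t\<in>{-1..1}. (\<Sum>k\<in>UNIV. a k * with_id F k t) = 0"
    then have a: "a None * t + (\<Sum>j\<in>UNIV. a (Some j) * F j t) = 0" if "t \<in> {-1..1}" for t
      using that by (simp add: sum_UNIV_option)
    \<comment> \<open>the identity is odd, so symmetrizing kills its coefficient\<close>
    have "(\<Sum>j\<in>UNIV. a (Some j) * even_part (F j) t) = 0" if "t \<in> {-1..1}" for t
    proof -
      have "(\<Sum>j\<in>UNIV. a (Some j) * even_part (F j) t)
          = (\<Sum>j\<in>UNIV. a (Some j) * F j t + a (Some j) * F j (- t)) / 2"
        unfolding sum_divide_distrib by (rule sum.cong) (simp_all add: even_part_def field_simps)
      also have "\<dots> = ((\<Sum>j\<in>UNIV. a (Some j) * F j t) + (\<Sum>j\<in>UNIV. a (Some j) * F j (- t))) / 2"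
        by (simp only: sum.distrib)
      finally show ?thesis using a[of t] a[of "-t"] that by simp
    qed
    then have "\<forall>j. a (Some j) = 0"
      using E unfolding lin_indep_on_def by (blast dest: spec[of _ "\<lambda>j. a (Some j)"])
    moreover have "a None = 0"
      using a[of 1] calculation by simp
    ultimately show "\<forall>k. a k = 0" by (metis option.exhaust)
  qed
  then show "F \<in> LIN" using F0 by (simp add: LIN_iff)
qed

lemma LIN_localize:
  assumes F: "F \<in> LIN" and r: "0 < r" "r \<le> 1"
  shows "(\<lambda>j. localize 0 r (F j)) \<in> LIN"
proof -
  have "lin_indep_on {-1..1} (with_id (\<lambda>j. localize 0 r (F j)))"
  proof (rule lin_indep_on_affine_transfer[where \<sigma>="\<lambda>s. r * s" and c=r and d=0])
    show "lin_indep_on {-1..1} (with_id F)" using F by (simp add: LIN_iff)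
    fix k and s :: real assume s: "s \<in> {-1..1}"
    show "r * s \<in> {-1..1}" by (rule scale_mem_interval[OF r s])
    show "with_id (\<lambda>j. localize 0 r (F j)) k (r * s) = r * with_id F k s + 0"
      using r(1) s by (cases k) (simp_all add: localize_0_scale)
  qed (use r in simp_all)
  then show ?thesis using F local_window_0[OF r] by (simp add: LIN_iff localize_grpG0)
qed

lemma LINplus_localize:
  assumes F: "F \<in> LINplus" and r: "0 < r" "r \<le> 1"
  shows "(\<lambda>j. localize 0 r (F j)) \<in> LINplus"
proof -
  have "lin_indep_on {-1..1} (\<lambda>j. even_part (localize 0 r (F j)))"
  proof (rule lin_indep_on_affine_transfer[where \<sigma>="\<lambda>s. r * s" and c=r and d=0])
    show "lin_indep_on {-1..1} (\<lambda>j. even_part (F j))" using F by (simp add: LINplus_def)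
    fix k and s :: real assume s: "s \<in> {-1..1}"
    show "r * s \<in> {-1..1}" by (rule scale_mem_interval[OF r s])
    show "even_part (localize 0 r (F k)) (r * s) = r * even_part (F k) s + 0"
      using localize_0_scale[OF r(1) s] localize_0_scale[OF r(1), of "-s"] s
      by (simp add: even_part_def field_simps)
  qed (use r in simp_all)
  then show ?thesis using F local_window_0[OF r] by (simp add: LINplus_def localize_grpG0)
qed

lemma LIN_reflect: assumes F: "F \<in> LIN" shows "(\<lambda>j. reflect (F j)) \<in> LIN"
proof -
  have "lin_indep_on {-1..1} (with_id (\<lambda>j. reflect (F j)))"
  proof (rule lin_indep_on_affine_transfer[where \<sigma>=uminus and c="-1" and d=0])
    show "lin_indep_on {-1..1} (with_id F)" using F by (simp add: LIN_iff)
    fix k and s :: real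
    show "with_id (\<lambda>j. reflect (F j)) k (- s) = - 1 * with_id F k s + 0"
      by (cases k) (simp_all add: reflect_def)
  qed auto
  then show ?thesis using F by (simp add: LIN_iff reflect_grpG0)
qed

lemma LINplus_reflect: assumes F: "F \<in> LINplus" shows "(\<lambda>j. reflect (F j)) \<in> LINplus"
proof -
  have "lin_indep_on {-1..1} (\<lambda>j. even_part (reflect (F j)))"
  proof (rule lin_indep_on_affine_transfer[where \<sigma>="\<lambda>s. s" and c="-1" and d=0])
    show "lin_indep_on {-1..1} (\<lambda>j. even_part (F j))" using F by (simp add: LINplus_def)
  qed (auto simp: reflect_def even_part_def)
  then show ?thesis using F by (simp add: LINplus_def reflect_grpG0)
qed

lemma LIN_juxtapose:
  assumes F: "\<And>j. F j \<in> grpG0" and H: "H \<in> LIN"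
  shows "(\<lambda>j. juxtapose (F j) (H j)) \<in> LIN"
proof -
  have FH: "F j \<in> grpG" "H j \<in> grpG0" for j
    using F[of j] H by (simp_all add: LIN_iff grpG0_def)
  have "lin_indep_on {-1..1} (with_id (\<lambda>j. juxtapose (F j) (H j)))"
  proof (rule lin_indep_on_affine_transfer[where \<sigma>="\<lambda>s. (s + 1) / 2" and c="1/2" and d="1/2"])
    show "lin_indep_on {-1..1} (with_id H)" using H by (simp add: LIN_iff)
    fix k and s :: real assume s: "s \<in> {-1..1}"
    then show "(s + 1) / 2 \<in> {-1..1}" by simp
    show "with_id (\<lambda>j. juxtapose (F j) (H j)) k ((s + 1) / 2) = 1/2 * with_id H k s + 1/2"
    proof (cases k)
      case (Some j)
      then show ?thesis using juxtapose_upper_half[OF FH(1) s, of j "H j"] by simp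
    qed simp
  next
    have "with_id (\<lambda>j. juxtapose (F j) (H j)) k 1 = 1" for k
    proof (cases k)
      case (Some j)
      have "juxtapose (F j) (H j) \<in> grpG"
        using FH(1) FH(2)[of j] by (simp add: grpG0_def juxtapose_grpG)
      then show ?thesis using Some by simp
    qed simp
    then show "1/2 = 0 \<or> (\<exists>p\<in>{-1..1}. \<forall>k. with_id (\<lambda>j. juxtapose (F j) (H j)) k p = 1)"
      by (intro disjI2 bexI[of _ 1]) auto
  qed simp
  then show ?thesis using FH(2) F by (simp add: LIN_iff juxtapose_grpG0)
qed

lemma LINplus_juxtapose_id:
  assumes H: "H \<in> LIN"
  shows "(\<lambda>j. juxtapose (\<lambda>t. t) (H j)) \<in> LINplus"
proof -
  have H0: "\<forall>j. H j \<in> grpG0" and L: "lin_indep_on {-1..1} (with_id H)"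
    using H by (auto simp: LIN_iff)
  have even: "even_part (juxtapose (\<lambda>t. t) (H j)) ((s + 1) / 2) = (H j s - s) / 4"
    if "s \<in> {-1..1}" for j s
    using H0 that by (simp add: grpG0_grpG even_part_juxtapose_id)
  have "lin_indep_on {-1..1} (\<lambda>j. even_part (juxtapose (\<lambda>t. t) (H j)))"
    unfolding lin_indep_on_def
  proof (rule allI, rule impI)
    fix a :: "'a \<Rightarrow> real"
    assume a: "\<forall>t\<in>{-1..1}. (\<Sum>j\<in>UNIV. a j * even_part (juxtapose (\<lambda>t. t) (H j)) t) = 0"
    define b where "b k = (case k of None \<Rightarrow> - sum a UNIV | Some j \<Rightarrow> a j)" for k
    have "(\<Sum>k\<in>UNIV. b k * with_id H k s) = 0" if s: "s \<in> {-1..1}" for s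
    proof -
      have "(\<Sum>k\<in>UNIV. b k * with_id H k s) = (\<Sum>j\<in>UNIV. a j * H j s) - sum a UNIV * s"
        by (simp add: sum_UNIV_option b_def)
      also have "\<dots> = (\<Sum>j\<in>UNIV. a j * (H j s - s))"
        by (simp add: right_diff_distrib sum_subtractf sum_distrib_right)
      also have "\<dots> = 4 * (\<Sum>j\<in>UNIV. a j * even_part (juxtapose (\<lambda>t. t) (H j)) ((s + 1) / 2))"
        unfolding even[OF s] by (simp add: sum_distrib_left)
      also have "\<dots> = 0" using a s by simp
      finally show ?thesis .
    qed
    then have "\<forall>k. b k = 0" using L unfolding lin_indep_on_def by blast
    then show "\<forall>j. a j = 0" by (metis b_def option.simps(5))
  qed
  then show ?thesis using H0 grpG0_id by (simp add: LINplus_def juxtapose_grpG0)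
qed

section \<open>Explicit families\<close>

lemma grpG_deriv_pos:
  assumes "\<And>x. (f has_real_derivative f' x) (at x)" "\<And>x. x \<in> {-1..1} \<Longrightarrow> 0 < f' x"
  shows "strict_mono_on {-1..1} f"
proof (rule strict_mono_onI)
  fix x y :: real assume "x \<in> {-1..1}" "y \<in> {-1..1}" "x < y"
  then show "f x < f y"
    using assms by (intro DERIV_pos_imp_increasing[OF \<open>x < y\<close>]) force
qed

lemma has_integral_interval_ftc:
  assumes "\<And>x. (F has_real_derivative f x) (at x)"
  shows "(f has_integral (F 1 - F (-1))) {-1..1}"
  by (rule fundamental_theorem_of_calculus)
    (auto intro: has_field_derivative_at_within[OF assms] simp: has_real_derivative_iff_has_vector_derivative[symmetric])

lemma odd_power_less: "odd n \<Longrightarrow> x < y \<Longrightarrow> (x::real) ^ n < y ^ n"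
  using power_mono_odd[of n x y] odd_real_root_power_cancel[of n x] odd_real_root_power_cancel[of n y]
  by (metis order_le_less order_less_irrefl)

lemma odd_power_grpG0:
  assumes "odd n"
  shows "(\<lambda>t::real. t ^ n) \<in> grpG0"
proof -
  have "(\<lambda>t::real. t ^ n) \<in> grpG"
    using assms by (intro grpG_intro strict_mono_onI odd_power_less) (auto intro: continuous_intros)
  moreover have "((\<lambda>x. x ^ Suc n / Suc n) has_real_derivative x ^ n) (at x)" for x :: real
    using DERIV_cdivide[OF DERIV_pow[of "Suc n" x], of "Suc n"] by simp
  then have "((\<lambda>t::real. t ^ n) has_integral 0) {-1..1}"
    using has_integral_interval_ftc[of "\<lambda>x. x ^ Suc n / Suc n" "\<lambda>x. x ^ n"] assms by simp
  ultimately show ?thesis by (simp add: grpG0_iff)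
qed

lemma LIN_nonempty: "\<exists>F::'n::finite \<Rightarrow> real \<Rightarrow> real. F \<in> LIN"
proof -
  obtain e :: "'n \<Rightarrow> nat" where e: "inj e"
    using finite_imp_inj_to_nat_seg[of "UNIV::'n set"] by auto
  define d where "d j = 2 * e j + 3" for j
  define F where "F j = (\<lambda>t::real. t ^ d j)" for j
  have "lin_indep_on {-1..1} (with_id F)"
    unfolding lin_indep_on_def
  proof (rule allI, rule impI)
    fix a :: "'n option \<Rightarrow> real"
    assume a: "\<forall>t\<in>{-1..1}. (\<Sum>k\<in>UNIV. a k * with_id F k t) = 0"
    \<comment> \<open>a polynomial vanishing on an infinite set is zero, and the exponents 1 and d j are distinct\<close>
    define p where "p = monom (a None) 1 + (\<Sum>j\<in>UNIV. monom (a (Some j)) (d j))"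
    have "poly p t = (\<Sum>k\<in>UNIV. a k * with_id F k t)" for t
      by (simp add: p_def F_def poly_monom poly_sum sum_UNIV_option)
    then have "{-1..1} \<subseteq> {t. poly p t = 0}" using a by auto
    moreover have "infinite {-1..(1::real)}" by (rule infinite_Icc) simp
    ultimately have "p = 0" using poly_roots_finite[of p] finite_subset by blast
    moreover have "coeff p k = (if k = 1 then a None else 0) + (\<Sum>j\<in>UNIV. if d j = k then a (Some j) else 0)"
      for k by (simp add: p_def coeff_sum coeff_monom)
    ultimately have coeff: "(if k = 1 then a None else 0) + (\<Sum>j\<in>UNIV. if d j = k then a (Some j) else 0) = 0"
      for k by (metis coeff_0)
    have "a None = 0" using coeff[of 1] by (simp add: d_def)
    moreover have "a (Some i) = 0" for i
    proof -
      have "(\<Sum>j\<in>UNIV. if d j = d i then a (Some j) else 0) = (\<Sum>j\<in>UNIV. if j = i then a (Some j) else 0)"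
        using e by (intro sum.cong) (auto simp: d_def inj_eq)
      then show ?thesis using coeff[of "d i"] by (simp add: d_def)
    qed
    ultimately show "\<forall>k. a k = 0" by (metis option.exhaust)
  qed
  moreover have "F j \<in> grpG0" for j by (simp add: F_def d_def odd_power_grpG0)
  ultimately show ?thesis by (auto simp: LIN_iff)
qed

lemma Qf_has_integral_deriv:
  assumes f: "f \<in> grpG" and g: "g \<in> grpG" and g': "\<And>x. (g has_real_derivative g' x) (at x)"
  shows "((\<lambda>x. g' x * f x) has_integral Qf f g) {-1..1}"
proof -
  let ?h = "\<lambda>t. f (inv_into {-1..1} g t)"
  have "((\<lambda>x. g' x *\<^sub>R ?h (g x)) has_integral (integral {g (-1)..g 1} ?h)) {-1..1}"
  proof (rule has_integral_substitution[where c="-1" and d=1])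
    show "continuous_on {-1..1} ?h" using grpG_continuous[OF grpG_comp[OF f grpG_inv_into[OF g]]] .
    show "\<And>x. x \<in> {-1..1} \<Longrightarrow> (g has_real_derivative g' x) (at x within {-1..1})"
      using has_field_derivative_at_within[OF g'] by blast
  qed (use g grpG_mem[OF g] in auto)
  then have "((\<lambda>x. g' x *\<^sub>R ?h (g x)) has_integral Qf f g) {-1..1}"
    using g by (simp add: Qf_def)
  then show ?thesis
    by (subst has_integral_cong[where g="\<lambda>x. g' x *\<^sub>R ?h (g x)"]) (auto simp: grpG_inv_into_f[OF g])
qed

lemma Qf_eq_antiderivative:
  assumes "f \<in> grpG" "g \<in> grpG" "\<And>x. (g has_real_derivative g' x) (at x)"
    and "\<And>x. (P has_real_derivative g' x * f x) (at x)"
  shows "Qf f g = P 1 - P (-1)"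
  using has_integral_unique[OF Qf_has_integral_deriv[OF assms(1-3)] has_integral_interval_ftc[OF assms(4)]] .

definition phi :: "real \<Rightarrow> real" where "phi t = t + (t - t ^ 3) / 4"
definition psi :: "real \<Rightarrow> real" where "psi t = t + (1 - 6 * t ^ 2 + 5 * t ^ 4) / 64"

lemma phi_deriv: "(phi has_real_derivative 5/4 - 3/4 * x ^ 2) (at x)"
  unfolding phi_def[abs_def] by (auto intro!: derivative_eq_intros simp: field_simps eval_nat_numeral)

lemma psi_deriv: "(psi has_real_derivative 1 + 5/16 * x ^ 3 - 3/16 * x) (at x)"
  unfolding psi_def[abs_def] by (auto intro!: derivative_eq_intros simp: field_simps eval_nat_numeral)

lemma phi_grpG0: "phi \<in> grpG0"
proof -
  have "x \<in> {-1..1} \<Longrightarrow> 0 < 5/4 - 3/4 * x ^ 2" for x :: real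
    using abs_square_le_1[of x] by auto
  then have "phi \<in> grpG"
    by (intro grpG_intro grpG_deriv_pos[OF phi_deriv]) (auto simp: phi_def intro!: continuous_intros)
  moreover have "(phi has_integral ((\<lambda>x. 5/8 * x^2 - 1/16 * x^4) 1 - (\<lambda>x. 5/8 * x^2 - 1/16 * x^4) (-1)))
      {-1..1}"
    by (rule has_integral_interval_ftc)
      (auto intro!: derivative_eq_intros simp: phi_def field_simps eval_nat_numeral)
  ultimately show ?thesis by (simp add: grpG0_iff)
qed

lemma psi_grpG0: "psi \<in> grpG0"
proof -
  have "x \<in> {-1..1} \<Longrightarrow> 0 < 1 + 5/16 * x ^ 3 - 3/16 * x" for x :: real
  proof -
    assume "x \<in> {-1..1}"
    then have "\<bar>x ^ 3\<bar> \<le> 1" by (auto simp: power_abs power_le_one)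
    then show ?thesis using \<open>x \<in> {-1..1}\<close> by auto
  qed
  then have "psi \<in> grpG"
    by (intro grpG_intro grpG_deriv_pos[OF psi_deriv]) (auto simp: psi_def intro!: continuous_intros)
  moreover have "(psi has_integral ((\<lambda>x. x/64 + x^2/2 - x^3/32 + x^5/64) 1
      - (\<lambda>x. x/64 + x^2/2 - x^3/32 + x^5/64) (-1))) {-1..1}"
    by (rule has_integral_interval_ftc)
      (auto intro!: derivative_eq_intros simp: psi_def field_simps eval_nat_numeral)
  ultimately show ?thesis by (simp add: grpG0_iff)
qed

lemma phi_grpG: "phi \<in> grpG" and psi_grpG: "psi \<in> grpG"
  using phi_grpG0 psi_grpG0 by (simp_all add: grpG0_def)

lemma Qf_pair_values:
  "Qf phi (\<lambda>t. t) = 0" "Qf psi (\<lambda>t. t) = 0" "Qf (\<lambda>t. t) phi = 0" "Qf (\<lambda>t. t) psi = 0"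
  "Qf psi phi = 1/280" "Qf phi psi = -1/280"
proof -
  show "Qf phi (\<lambda>t. t) = 0" "Qf psi (\<lambda>t. t) = 0"
    using phi_grpG0 psi_grpG0 by (simp_all add: Qf_id_right grpG0_def)
  show "Qf (\<lambda>t. t) phi = 0"
    by (subst Qf_eq_antiderivative[OF grpG_id phi_grpG phi_deriv, of "\<lambda>x. 5/8 * x^2 - 3/16 * x^4"])
      (auto intro!: derivative_eq_intros simp: field_simps eval_nat_numeral)
  show "Qf (\<lambda>t. t) psi = 0"
    by (subst Qf_eq_antiderivative[OF grpG_id psi_grpG psi_deriv, of "\<lambda>x. x^2/2 - x^3/16 + x^5/16"])
      (auto intro!: derivative_eq_intros simp: field_simps eval_nat_numeral)
  show "Qf psi phi = 1/280"
    by (subst Qf_eq_antiderivative[OF psi_grpG phi_grpG phi_deriv,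
          of "\<lambda>x. 5/256*x + 5/8*x^2 - 11/256*x^3 - 3/16*x^4 + 43/1280*x^5 - 15/1792*x^7"])
      (auto intro!: derivative_eq_intros simp: psi_def field_simps eval_nat_numeral)
  show "Qf phi psi = -1/280"
    by (subst Qf_eq_antiderivative[OF phi_grpG psi_grpG psi_deriv,
          of "\<lambda>x. 5/8*x^2 - 5/64*x^3 - 1/16*x^4 + 7/80*x^5 - 5/448*x^7"])
      (auto intro!: derivative_eq_intros simp: phi_def field_simps eval_nat_numeral)
qed

definition pair_block :: "'n \<Rightarrow> 'n \<Rightarrow> 'n \<Rightarrow> real \<Rightarrow> real" where
  "pair_block p q k = (if k = p then phi else if k = q then psi else (\<lambda>t. t))"

definition antisym_unit :: "'n::finite \<Rightarrow> 'n \<Rightarrow> real^'n^'n" where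
  "antisym_unit p q = (\<chi> i j. (if i = p \<and> j = q then 1 else 0) - (if i = q \<and> j = p then 1 else 0))"

lemma Qmat_pair_block: "Qmat (pair_block p q) = (1/280) *\<^sub>R antisym_unit p q"
  by (auto simp: vec_eq_iff Qmat_def antisym_unit_def pair_block_def Qf_pair_values Qf_self
      phi_grpG psi_grpG grpG_id)

section \<open>The image sets\<close>

lemma Qmat_localize:
  "(\<And>k. F k \<in> grpG) \<Longrightarrow> local_window m r \<Longrightarrow> Qmat (\<lambda>k. localize m r (F k)) = r\<^sup>2 *\<^sub>R Qmat F"
  unfolding Qmat_def by (simp add: vec_eq_iff Qf_localize)

lemma Qmat_reflect: "(\<And>k. F k \<in> grpG) \<Longrightarrow> Qmat (\<lambda>k. reflect (F k)) = - Qmat F"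
  unfolding Qmat_def by (simp add: vec_eq_iff Qf_reflect)

lemma Qmat_juxtapose:
  "(\<And>k. F k \<in> grpG) \<Longrightarrow> (\<And>k. H k \<in> grpG) \<Longrightarrow>
    Qmat (\<lambda>k. juxtapose (F k) (H k)) = (1/4) *\<^sub>R (Qmat F + Qmat H)"
  unfolding Qmat_def by (simp add: vec_eq_iff Qf_juxtapose)

lemma Qmat_id_family: "Qmat (\<lambda>k. \<lambda>t::real. t) = 0"
  by (simp add: Qmat_def vec_eq_iff Qf_self grpG_id)

definition balanced :: "'v::real_vector set \<Rightarrow> bool" where
  "balanced C \<longleftrightarrow> (\<forall>x\<in>C. \<forall>s. \<bar>s\<bar> \<le> 1 \<longrightarrow> s *\<^sub>R x \<in> C)"

lemma balancedD: "balanced C \<Longrightarrow> x \<in> C \<Longrightarrow> \<bar>s\<bar> \<le> 1 \<Longrightarrow> s *\<^sub>R x \<in> C"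
  by (simp add: balanced_def)

lemma balanced_Qmat_image:
  fixes P :: "('n::finite \<Rightarrow> real \<Rightarrow> real) set"
  assumes P: "\<And>F j. F \<in> P \<Longrightarrow> F j \<in> grpG"
    and zero: "0 \<in> Qmat ` P"
    and localize: "\<And>F r. F \<in> P \<Longrightarrow> 0 < r \<Longrightarrow> r \<le> 1 \<Longrightarrow> (\<lambda>j. localize 0 r (F j)) \<in> P"
    and reflect: "\<And>F. F \<in> P \<Longrightarrow> (\<lambda>j. reflect (F j)) \<in> P"
  shows "balanced (Qmat ` P)"
  unfolding balanced_def
proof (intro ballI allI impI)
  fix X and s :: real assume X: "X \<in> Qmat ` P" and s: "\<bar>s\<bar> \<le> 1"
  have scale: "r\<^sup>2 *\<^sub>R Y \<in> Qmat ` P" if Y: "Y \<in> Qmat ` P" and r: "0 < r" "r \<le> 1" for Y r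
  proof -
    obtain F where F: "F \<in> P" "Y = Qmat F" using Y by blast
    have "Qmat (\<lambda>j. localize 0 r (F j)) = r\<^sup>2 *\<^sub>R Y"
      using Qmat_localize[of F 0 r] P[OF F(1)] local_window_0[OF r] F(2) by simp
    then show ?thesis using localize[OF F(1) r] by (metis image_eqI)
  qed
  have neg: "- Y \<in> Qmat ` P" if Y: "Y \<in> Qmat ` P" for Y
  proof -
    obtain F where F: "F \<in> P" "Y = Qmat F" using Y by blast
    have "Qmat (\<lambda>j. reflect (F j)) = - Y"
      using Qmat_reflect[of F] P[OF F(1)] F(2) by simp
    then show ?thesis using reflect[OF F(1)] by (metis image_eqI)
  qed
  consider "s = 0" | "0 < s" | "s < 0" by linarith
  then show "s *\<^sub>R X \<in> Qmat ` P"
  proof cases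
    case 2
    then show ?thesis using scale[OF X, of "sqrt s"] s by simp
  next
    case 3
    then show ?thesis using neg[OF scale[OF X, of "sqrt (- s)"]] s by simp
  qed (use zero in simp)
qed

definition grpG0_families :: "('n::finite \<Rightarrow> real \<Rightarrow> real) set" where
  "grpG0_families = {F. \<forall>j. F j \<in> grpG0}"

lemma LIN_subset_grpG0_families: "LIN \<subseteq> grpG0_families"
  by (auto simp: LIN_iff grpG0_families_def)

lemma Qmat_LIN_juxtapose:
  assumes "X \<in> Qmat ` grpG0_families" "Y \<in> Qmat ` LIN"
  shows "(1/4) *\<^sub>R (X + Y) \<in> Qmat ` LIN"
proof -
  obtain F H where F: "\<forall>j. F j \<in> grpG0" "X = Qmat F" and H: "H \<in> LIN" "Y = Qmat H"
    using assms by (auto simp: grpG0_families_def)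
  have "F j \<in> grpG" "H j \<in> grpG" for j
    using F H by (auto simp: LIN_iff grpG0_grpG)
  then have "Qmat (\<lambda>j. juxtapose (F j) (H j)) = (1/4) *\<^sub>R (X + Y)"
    using F(2) H(2) by (simp add: Qmat_juxtapose)
  with LIN_juxtapose[OF _ H(1)] F(1) show ?thesis by (metis image_eqI)
qed

lemma Qmat_LINplus_quarter:
  assumes "Y \<in> Qmat ` LIN"
  shows "(1/4) *\<^sub>R Y \<in> Qmat ` LINplus"
proof -
  obtain H where H: "H \<in> LIN" "Y = Qmat H" using assms by blast
  have "H j \<in> grpG" for j using H by (auto simp: LIN_iff grpG0_grpG)
  then have "Qmat (\<lambda>j. juxtapose (\<lambda>t. t) (H j)) = (1/4) *\<^sub>R Y"
    using H(2) Qmat_juxtapose[of "\<lambda>j t. t" H] grpG_id Qmat_id_family by simp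
  with LINplus_juxtapose_id[OF H(1)] show ?thesis by (metis image_eqI)
qed

lemma zero_mem_Qmat_LIN: "(0::real^'n::finite^'n) \<in> Qmat ` LIN"
proof -
  obtain F :: "'n::finite \<Rightarrow> real \<Rightarrow> real" where F: "F \<in> LIN" using LIN_nonempty by blast
  have "F j \<in> grpG" for j using F by (auto simp: LIN_iff grpG0_grpG)
  then have "- Qmat F \<in> Qmat ` LIN" using Qmat_reflect LIN_reflect[OF F] by (metis image_eqI)
  moreover have "Qmat F \<in> Qmat ` grpG0_families" using F LIN_subset_grpG0_families by blast
  ultimately show ?thesis using Qmat_LIN_juxtapose[of "Qmat F" "- Qmat F"] by simp
qed

lemma balanced_Qmat_grpG0_families: "balanced (Qmat ` grpG0_families)"
proof (rule balanced_Qmat_image)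
  show "0 \<in> Qmat ` grpG0_families"
    using Qmat_id_family grpG0_id by (force simp: grpG0_families_def)
qed (auto simp: grpG0_families_def grpG0_grpG localize_grpG0 reflect_grpG0 local_window_0)

lemma balanced_Qmat_LIN: "balanced (Qmat ` LIN)"
  by (rule balanced_Qmat_image[OF _ zero_mem_Qmat_LIN LIN_localize LIN_reflect])
    (auto simp: LIN_iff grpG0_grpG)

lemma balanced_Qmat_LINplus: "balanced (Qmat ` LINplus)"
  by (rule balanced_Qmat_image[OF _ _ LINplus_localize LINplus_reflect])
    (use Qmat_LINplus_quarter[OF zero_mem_Qmat_LIN] in \<open>auto simp: LINplus_def grpG0_grpG\<close>)

lemma Qmat_LIN_absorbs_sum:
  assumes "finite I" "\<forall>i\<in>I. v i \<in> Qmat ` grpG0_families"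
  shows "\<exists>c>0. c \<le> 1 \<and> c *\<^sub>R (\<Sum>i\<in>I. v i) \<in> Qmat ` LIN"
  using assms
proof (induction I rule: finite_induct)
  case empty
  then show ?case using zero_mem_Qmat_LIN by (intro exI[of _ 1]) simp
next
  case (insert x I)
  obtain c where c: "0 < c" "c \<le> 1" "c *\<^sub>R (\<Sum>i\<in>I. v i) \<in> Qmat ` LIN"
    using insert.IH insert.prems by auto
  have "c *\<^sub>R v x \<in> Qmat ` grpG0_families"
    using balancedD[OF balanced_Qmat_grpG0_families, of "v x" c] insert.prems c(1,2) by simp
  from Qmat_LIN_juxtapose[OF this c(3)]
  have "(c / 4) *\<^sub>R (\<Sum>i\<in>insert x I. v i) \<in> Qmat ` LIN"
    using insert.hyps by (simp add: scaleR_add_right)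
  then show ?case using c(1,2) by (intro exI[of _ "c / 4"]) simp
qed

lemma antisym_unit_decomposition:
  fixes A :: "real^'n::finite^'n"
  assumes "A \<in> antisym_mats"
  shows "(\<Sum>p\<in>UNIV. \<Sum>q\<in>UNIV. (A $ p $ q / 2) *\<^sub>R antisym_unit p q) = A"
proof -
  have A: "A $ j $ i = - A $ i $ j" for i j
  proof -
    have "transpose A $ i $ j = (- A) $ i $ j" using assms by (simp add: antisym_mats_def)
    then show ?thesis by (simp add: transpose_def)
  qed
  have delta: "(\<Sum>p\<in>UNIV. \<Sum>q\<in>UNIV. if a = p \<and> b = q then f p q else 0) = (f a b :: real)"
    and delta_swap: "(\<Sum>p\<in>UNIV. \<Sum>q\<in>UNIV. if a = q \<and> b = p then f p q else 0) = (f b a :: real)"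
    for a b :: 'n and f
  proof -
    have "(\<Sum>q\<in>UNIV. if a = p \<and> b = q then f p q else 0) = (if a = p then f p b else 0)"
      "(\<Sum>q\<in>UNIV. if a = q \<and> b = p then f p q else 0) = (if b = p then f p a else 0)" for p
      by (cases "a = p"; cases "b = p"; simp)+
    then show "(\<Sum>p\<in>UNIV. \<Sum>q\<in>UNIV. if a = p \<and> b = q then f p q else 0) = f a b"
      "(\<Sum>p\<in>UNIV. \<Sum>q\<in>UNIV. if a = q \<and> b = p then f p q else 0) = f b a" by simp_all
  qed
  have "(\<Sum>p\<in>UNIV. \<Sum>q\<in>UNIV. (A $ p $ q / 2) *\<^sub>R antisym_unit p q) $ i $ j = A $ i $ j" for i j
  proof -
    have entry: "(A $ p $ q / 2) * (antisym_unit p q $ i $ j)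
        = (if i = p \<and> j = q then A $ p $ q / 2 else 0) - (if i = q \<and> j = p then A $ p $ q / 2 else 0)"
      for p q unfolding antisym_unit_def vec_lambda_beta right_diff_distrib
        if_distrib[of "(*) (A $ p $ q / 2)"] by simp
    have "(\<Sum>p\<in>UNIV. \<Sum>q\<in>UNIV. (A $ p $ q / 2) *\<^sub>R antisym_unit p q) $ i $ j
        = (\<Sum>p\<in>UNIV. \<Sum>q\<in>UNIV. (A $ p $ q / 2) * (antisym_unit p q $ i $ j))"
      by simp
    also have "\<dots> = A $ i $ j / 2 - A $ j $ i / 2"
      by (simp only: entry sum_subtractf delta delta_swap)
    finally have "(\<Sum>p\<in>UNIV. \<Sum>q\<in>UNIV. (A $ p $ q / 2) *\<^sub>R antisym_unit p q) $ i $ j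
        = A $ i $ j / 2 - A $ j $ i / 2" .
    then show ?thesis using A[of i j] by simp
  qed
  then show ?thesis by (simp add: vec_eq_iff)
qed

lemma antisym_unit_mem_Qmat_grpG0_families: "(1/280) *\<^sub>R antisym_unit p q \<in> Qmat ` grpG0_families"
proof -
  have "pair_block p q \<in> grpG0_families"
    by (simp add: grpG0_families_def pair_block_def phi_grpG0 psi_grpG0 grpG0_id)
  then show ?thesis using Qmat_pair_block by (metis image_eqI)
qed

lemma antisym_mats_absorbed_LIN:
  fixes A :: "real^'n::finite^'n"
  assumes A: "A \<in> antisym_mats"
  shows "\<exists>e>0. e *\<^sub>R A \<in> Qmat ` LIN"
proof -
  define M where "M = 1 + (\<Sum>p\<in>UNIV. \<Sum>q\<in>UNIV. \<bar>A $ p $ q\<bar>)"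
  have bound: "\<bar>A $ p $ q\<bar> \<le> M - 1" for p q
  proof -
    have "\<bar>A $ p $ q\<bar> \<le> (\<Sum>q\<in>UNIV. \<bar>A $ p $ q\<bar>)" by (rule member_le_sum) auto
    also have "\<dots> \<le> (\<Sum>p\<in>UNIV. \<Sum>q\<in>UNIV. \<bar>A $ p $ q\<bar>)" by (rule member_le_sum) (auto intro: sum_nonneg)
    finally show ?thesis by (simp add: M_def)
  qed
  have M: "0 < M" unfolding M_def by (simp add: add_pos_nonneg sum_nonneg)
  define v where "v pq = (A $ fst pq $ snd pq / (2 * M)) *\<^sub>R ((1/280) *\<^sub>R antisym_unit (fst pq) (snd pq))"
    for pq :: "'n \<times> 'n"
  have "\<bar>A $ p $ q / (2 * M)\<bar> \<le> 1" for p q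
    using bound[of p q] M by (simp add: abs_div divide_le_eq)
  then have "v pq \<in> Qmat ` grpG0_families" for pq
    unfolding v_def by (intro balancedD[OF balanced_Qmat_grpG0_families antisym_unit_mem_Qmat_grpG0_families])
  then obtain c where c: "0 < c" "c *\<^sub>R (\<Sum>pq\<in>UNIV. v pq) \<in> Qmat ` LIN"
    using Qmat_LIN_absorbs_sum[of UNIV v] by auto
  have "(\<Sum>pq\<in>UNIV. v pq) = (\<Sum>p\<in>UNIV. \<Sum>q\<in>UNIV. v (p, q))"
    unfolding sum.cartesian_product UNIV_Times_UNIV by simp
  also have "\<dots> = (1 / (280 * M)) *\<^sub>R (\<Sum>p\<in>UNIV. \<Sum>q\<in>UNIV. (A $ p $ q / 2) *\<^sub>R antisym_unit p q)"
    by (simp add: v_def scaleR_sum_right)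
  also have "\<dots> = (1 / (280 * M)) *\<^sub>R A" by (simp add: antisym_unit_decomposition[OF A])
  finally have "(c / (280 * M)) *\<^sub>R A \<in> Qmat ` LIN" using c(2) by simp
  then show ?thesis using c(1) M by (intro exI[of _ "c / (280 * M)"]) simp
qed

lemma antisym_mats_absorbed_LINplus:
  fixes A :: "real^'n::finite^'n"
  assumes "A \<in> antisym_mats"
  shows "\<exists>e>0. e *\<^sub>R A \<in> Qmat ` LINplus"
proof -
  obtain e where "0 < e" "e *\<^sub>R A \<in> Qmat ` LIN" using antisym_mats_absorbed_LIN[OF assms] by blast
  then show ?thesis using Qmat_LINplus_quarter[of "e *\<^sub>R A"] by (intro exI[of _ "e / 4"]) auto
qed

lemma star_shaped0_if_balanced:
  assumes C: "balanced C" and absorbing: "\<And>v. v \<in> V \<Longrightarrow> v \<noteq> 0 \<Longrightarrow> \<exists>e>0. e *\<^sub>R v \<in> C"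
  shows "star_shaped0 V C"
  unfolding star_shaped0_def
proof (intro ballI impI conjI)
  fix v assume v: "v \<in> V" "v \<noteq> 0"
  let ?S = "{x::real. x *\<^sub>R v \<in> C}"
  have shrink: "y \<in> ?S" if "x \<in> ?S" "\<bar>y\<bar> \<le> \<bar>x\<bar>" for x y
  proof (cases "x = 0")
    case True
    obtain e where "e *\<^sub>R v \<in> C" using absorbing[OF v] by blast
    then show ?thesis using balancedD[OF C, of "e *\<^sub>R v" 0] True that(2) by simp
  next
    case False
    have "x *\<^sub>R v \<in> C" using that(1) by simp
    then have "(y / x) *\<^sub>R (x *\<^sub>R v) \<in> C"
      by (rule balancedD[OF C]) (use False that(2) in \<open>simp add: abs_div\<close>)
    then show ?thesis using False by simp
  qed
  show "is_interval ?S"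
    unfolding is_interval_1
  proof (intro ballI allI impI)
    fix a b x assume "a \<in> ?S" "b \<in> ?S" "a \<le> x \<and> x \<le> b"
    then show "x \<in> ?S" using shrink[of a x] shrink[of b x] by (cases "0 \<le> x") auto
  qed
  obtain e where e: "0 < e" "e \<in> ?S" using absorbing[OF v] by blast
  have "ball 0 e \<subseteq> ?S" using shrink[OF e(2)] e(1) by (auto simp: dist_real_def)
  then show "0 \<in> interior ?S" using e(1) by (auto simp: mem_interior)
qed

theorem theorem4p14:
  shows "Qmat ` LINplus \<subseteq> Qmat ` (LIN :: ('n::finite \<Rightarrow> real \<Rightarrow> real) set)
         \<and> star_shaped0 (antisym_mats :: (real^'n^'n) set) (Qmat ` (LINplus :: ('n \<Rightarrow> real \<Rightarrow> real) set))
         \<and> star_shaped0 (antisym_mats :: (real^'n^'n) set) (Qmat ` (LIN :: ('n \<Rightarrow> real \<Rightarrow> real) set))"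
proof (intro conjI)
  show "Qmat ` LINplus \<subseteq> Qmat ` (LIN :: ('n \<Rightarrow> real \<Rightarrow> real) set)"
    by (rule image_mono[OF LINplus_subset_LIN])
  show "star_shaped0 antisym_mats (Qmat ` (LIN :: ('n \<Rightarrow> real \<Rightarrow> real) set))"
    using balanced_Qmat_LIN antisym_mats_absorbed_LIN by (rule star_shaped0_if_balanced)
  show "star_shaped0 antisym_mats (Qmat ` (LINplus :: ('n \<Rightarrow> real \<Rightarrow> real) set))"
    using balanced_Qmat_LINplus antisym_mats_absorbed_LINplus by (rule star_shaped0_if_balanced)
qed

end
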